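(* Let $\mathfrak g$ be a semisimple Lie algebra of $r\times r$ matrices, identified with its dual via the trace form, let $N\ge 1$, let $a_1,\dots,a_N$ be pairwise distinct complex numbers and let $\sigma\in\mathfrak g$ be a fixed constant matrix. On $\mathfrak g^N\ni(A_1,\dots,A_N)$ introduce the new coordinates $B_0,\dots,B_{N-1}$ by $$B_l=(-1)^{N-l-1}\sum_{i=1}^N s_{N-l-1}(a_1,\dots,\widehat{a_i},\dots,a_N)\,A_i+(-1)^{N-l}s_{N-l}(a_1,\dots,a_N)\,\sigma,\qquad l=0,\dots,N-1,$$ (so that $\lambda^N\sigma+\sum_{i=0}^{N-1}B_i\lambda^i=\prod_{i=1}^N(\lambda-a_i)\cdot\big(\sigma+\sum_{i=1}^N\frac{A_i}{\lambda-a_i}\big)$), and set $B_N=\sigma$, $B_k=0$ for $k<0$ or $k>N$. For $l=0,\dots,N$ let $\Pi_l$ be the Poisson tensor given in these coordinates by the $N\times N$ block-diagonal operator matrix $\Pi_l=\begin{pmatrix}C_l&0\\0&D_l\end{pmatrix}$ with $(C_l)_{ij}=-[B_{i+j-l-1},\cdot\,]$ for $i,j=1,\dots,l$ and $(D_l)_{ij}=[B_{i+j+l-1},\cdot\,]$ for $i,j=1,\dots,N-l$, where rows and columns are indexed in order by $B_0,\dots,B_{N-1}$. Then the diagonal Lie–Poisson tensor $P$ on $\mathfrak g^N$ is, in the coordinates $B_0,\dots,B_{N-1}$, given by $$P=\sum_{l=0}^N(-1)^{N-l-1}s_{N-l}(a_1,\dots,a_N)\,\Pi_l .$$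
   Context: $s_k(x_1,\dots,x_m)$ denotes the $k$-th elementary symmetric polynomial ($s_0=1$, $s_k=0$ for $k<0$ or $k>m$), and a hat denotes omission. For a smooth function $F$ on $\mathfrak g^N$, $\partial F/\partial A_i\in\mathfrak g$ is defined by $F(\dots,A_i+t\Xi,\dots)=F+t\,\mathrm{Tr}(\frac{\partial F}{\partial A_i}\Xi)+o(t)$ for all $\Xi\in\mathfrak g$ (similarly for $\partial F/\partial B_j$). A tensor $T$ represented by an operator matrix $(T_{ij})$ acts by $(T\,dF)_i=\sum_j T_{ij}(\partial F/\partial X_j)$ and defines the bracket $\{F,G\}_T=\sum_i\mathrm{Tr}\big(\frac{\partial F}{\partial X_i}(T\,dG)_i\big)$, where $X_j$ are the coordinates in use. The diagonal Lie–Poisson tensor $P$ is given in the coordinates $A_1,\dots,A_N$ by $(P\,dF)_i=[A_i,\partial F/\partial A_i]$, $i=1,\dots,N$ (diagonal operator matrix with entries $[A_i,\cdot\,]$). *)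

theory Defs
  imports "HOL-Analysis.Analysis"
begin

type_synonym 'r cmat = "complex^'r^'r"

definition msc :: "complex \<Rightarrow> 'r::finite cmat \<Rightarrow> 'r cmat" where
  "msc c M = (\<chi> i j. c * M$i$j)"

definition lbr :: "'r::finite cmat \<Rightarrow> 'r cmat \<Rightarrow> 'r cmat" where
  "lbr X Y = X ** Y - Y ** X"

definition csubspace :: "'r::finite cmat set \<Rightarrow> bool" where
  "csubspace S \<longleftrightarrow> 0 \<in> S \<and> (\<forall>x\<in>S. \<forall>y\<in>S. x + y \<in> S) \<and> (\<forall>c. \<forall>x\<in>S. msc c x \<in> S)"

definition lie_subalgebra :: "'r::finite cmat set \<Rightarrow> bool" where
  "lie_subalgebra g \<longleftrightarrow> csubspace g \<and> (\<forall>x\<in>g. \<forall>y\<in>g. lbr x y \<in> g)"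

definition lie_ideal :: "'r::finite cmat set \<Rightarrow> 'r cmat set \<Rightarrow> bool" where
  "lie_ideal I g \<longleftrightarrow> csubspace I \<and> I \<subseteq> g \<and> (\<forall>x\<in>g. \<forall>y\<in>I. lbr x y \<in> I)"

inductive_set derived :: "'r::finite cmat set \<Rightarrow> 'r cmat set" for I where
  zero: "0 \<in> derived I"
| br: "x \<in> I \<Longrightarrow> y \<in> I \<Longrightarrow> lbr x y \<in> derived I"
| add: "u \<in> derived I \<Longrightarrow> v \<in> derived I \<Longrightarrow> u + v \<in> derived I"
| smul: "u \<in> derived I \<Longrightarrow> msc c u \<in> derived I"

definition solvable :: "'r::finite cmat set \<Rightarrow> bool" where
  "solvable I \<longleftrightarrow> (\<exists>k. (derived ^^ k) I \<subseteq> {0})"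

definition semisimple :: "'r::finite cmat set \<Rightarrow> bool" where
  "semisimple g \<longleftrightarrow> lie_subalgebra g \<and> (\<forall>I. lie_ideal I g \<and> solvable I \<longrightarrow> I = {0})"

definition esym :: "nat \<Rightarrow> nat set \<Rightarrow> (nat \<Rightarrow> complex) \<Rightarrow> complex" where
  "esym k S a = (\<Sum>T\<in>{T. T \<subseteq> S \<and> card T = k}. \<Prod>i\<in>T. a i)"

definition Bcoord :: "nat \<Rightarrow> (nat \<Rightarrow> complex) \<Rightarrow> 'r::finite cmat \<Rightarrow> (nat \<Rightarrow> 'r cmat) \<Rightarrow> int \<Rightarrow> 'r cmat" where
  "Bcoord N a \<sigma> A k =
     (if k < 0 \<or> k > int N then 0
      else if k = int N then \<sigma>
      else (let l = nat k in
        (\<Sum>i=1..N. msc ((-1)^(N-l-1) * esym (N-l-1) ({1..N} - {i}) a) (A i))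
        + msc ((-1)^(N-l) * esym (N-l) {1..N} a) \<sigma>))"

definition has_grad :: "'r::finite cmat set \<Rightarrow> nat \<Rightarrow> nat \<Rightarrow> ((nat \<Rightarrow> 'r cmat) \<Rightarrow> complex)
    \<Rightarrow> (nat \<Rightarrow> 'r cmat) \<Rightarrow> (nat \<Rightarrow> 'r cmat) \<Rightarrow> bool" where
  "has_grad g off n F X Y \<longleftrightarrow>
     (\<forall>i\<in>{off..<off+n}. Y i \<in> g) \<and>
     (\<forall>V. (\<forall>i\<in>{off..<off+n}. V i \<in> g) \<and> (\<forall>i. i \<notin> {off..<off+n} \<longrightarrow> V i = 0) \<longrightarrow>
        ((\<lambda>t. F (\<lambda>i. X i + msc t (V i))) has_field_derivative
            (\<Sum>i\<in>{off..<off+n}. trace (Y i ** V i))) (at 0))"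

definition P_bracket :: "nat \<Rightarrow> (nat \<Rightarrow> 'r::finite cmat) \<Rightarrow> (nat \<Rightarrow> 'r cmat) \<Rightarrow> (nat \<Rightarrow> 'r cmat) \<Rightarrow> complex" where
  "P_bracket N A dF dG = (\<Sum>i=1..N. trace (dF i ** lbr (A i) (dG i)))"

text \<open>Bracket of Pi_l in coordinates B_0..B_(N-1) (row/column p+1 corresponds to B_p),
  evaluated on B-gradients dF, dG (indexed 0..N-1); B is the extended coordinate family.\<close>
definition Pi_bracket :: "nat \<Rightarrow> nat \<Rightarrow> (int \<Rightarrow> 'r::finite cmat) \<Rightarrow> (nat \<Rightarrow> 'r cmat) \<Rightarrow> (nat \<Rightarrow> 'r cmat) \<Rightarrow> complex" where
  "Pi_bracket N l B dF dG =
     (\<Sum>i=1..l. \<Sum>j=1..l. trace (dF (i-1) ** (- lbr (B (int i + int j - int l - 1)) (dG (j-1)))))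
   + (\<Sum>i=1..N-l. \<Sum>j=1..N-l. trace (dF (l+i-1) ** lbr (B (int i + int j + int l - 1)) (dG (l+j-1))))"

end

theory Submission
  imports Defs
begin

(* Write Q(x) = prod_i (x - a_i) = sum_k q_k x^k and M_i(x) = Q(x) / (x - a_i) = sum_k m_ik x^k,
   so that B_k = sum_i m_ik A_i + q_k sigma.  By the chain rule dF/dA_i = sum_p m_ip dF/dB_p
   modulo the trace-orthogonal complement of g, which ad-invariance of the trace form makes
   invisible; hence {F,G}_P = sum_{p,r,i} m_ip m_ir Tr(d_pF [A_i, d_rG]).  The (p,r) entry of
   Pi_l is eps_l(p,r) [B_(p+r+1-l), .] with eps_l(p,r) = -1 on the upper diagonal block, +1 on
   the lower one and 0 elsewhere, so the theorem reduces to the scalar identities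
     sum_l -q_l eps_l(p,r) m_(i,p+r+1-l) = m_ip m_ir   and   sum_l -q_l eps_l(p,r) q_(p+r+1-l) = 0.
   The second holds by the reflection l -> p+r+1-l; after the same reflection the first becomes
   a telescoping sum, because Q(x) = (x - a_i) M_i(x), i.e. q_k = m_(i,k-1) - a_i m_ik. *)

section \<open>Matrix identities and the trace pairing\<close>

lemma matrix_add_rdistrib: "(A + B) ** C = A ** C + B ** (C :: 'r::finite cmat)"
  by (simp add: matrix_matrix_mult_def vec_eq_iff sum.distrib algebra_simps)

lemma matrix_diff_ldistrib: "A ** (B - C) = A ** B - A ** (C :: 'r::finite cmat)"
  by (simp add: matrix_matrix_mult_def vec_eq_iff sum_subtractf algebra_simps)

lemma lbr_add_left: "lbr (X + Y) Z = lbr X Z + lbr Y (Z :: 'r::finite cmat)"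
  by (simp add: lbr_def matrix_add_rdistrib matrix_add_ldistrib)

lemma lbr_add_right: "lbr X (Y + Z) = lbr X Y + lbr X (Z :: 'r::finite cmat)"
  by (simp add: lbr_def matrix_add_rdistrib matrix_add_ldistrib)

lemma msc_matrix_mult_left: "msc c X ** Y = msc c (X ** Y :: 'r::finite cmat)"
  by (simp add: msc_def matrix_matrix_mult_def sum_distrib_left algebra_simps vec_eq_iff)

lemma msc_matrix_mult_right: "X ** msc c Y = msc c (X ** Y :: 'r::finite cmat)"
  by (simp add: msc_def matrix_matrix_mult_def sum_distrib_left algebra_simps vec_eq_iff)

lemma msc_diff: "msc c X - msc c Y = msc c (X - Y :: 'r::finite cmat)"
  by (simp add: msc_def vec_eq_iff algebra_simps)

lemma lbr_msc_left: "lbr (msc c X) Y = msc c (lbr X Y :: 'r::finite cmat)"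
  by (simp add: lbr_def msc_matrix_mult_left msc_matrix_mult_right msc_diff)

lemma lbr_msc_right: "lbr X (msc c Y) = msc c (lbr X Y :: 'r::finite cmat)"
  by (simp add: lbr_def msc_matrix_mult_left msc_matrix_mult_right msc_diff)

lemma trace_msc: "trace (msc c X) = c * trace (X :: 'r::finite cmat)"
  by (simp add: trace_def msc_def sum_distrib_left)

lemma msc_0 [simp]: "msc 0 X = (0 :: 'r::finite cmat)"
  and msc_1 [simp]: "msc 1 X = (X :: 'r::finite cmat)"
  and msc_zero [simp]: "msc c 0 = (0 :: 'r::finite cmat)"
  and msc_msc: "msc c (msc d X) = msc (c * d) (X :: 'r::finite cmat)"
  and msc_add: "msc c (X + Y) = msc c X + msc c (Y :: 'r::finite cmat)"
  by (simp_all add: msc_def vec_eq_iff algebra_simps)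

definition trace_ad :: "'r::finite cmat \<Rightarrow> 'r cmat \<Rightarrow> 'r cmat \<Rightarrow> complex" where
  "trace_ad u X v = trace (u ** lbr X v)"

lemma trace_ad_cycle: "trace_ad u X v = trace_ad v u X"
proof -
  have "trace (u ** (X ** v)) = trace (v ** (u ** X))"
    by (metis matrix_mul_assoc trace_mul_sym)
  moreover have "trace (u ** (v ** X)) = trace (v ** (X ** u))"
    by (metis matrix_mul_assoc trace_mul_sym)
  ultimately show ?thesis
    by (simp add: trace_ad_def lbr_def matrix_diff_ldistrib trace_sub)
qed

lemma additive_trace_ad_1: "Modules.additive (\<lambda>u. trace_ad u X v)"
  by standard (simp add: trace_ad_def matrix_add_rdistrib trace_add)

lemma additive_trace_ad_2: "Modules.additive (\<lambda>X. trace_ad u X v)"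
  by standard (simp add: trace_ad_def lbr_add_left matrix_add_ldistrib trace_add)

lemma additive_trace_ad_3: "Modules.additive (\<lambda>v. trace_ad u X v)"
  by standard (simp add: trace_ad_def lbr_add_right matrix_add_ldistrib trace_add)

lemma trace_ad_msc_1: "trace_ad (msc c u) X v = c * trace_ad u X v"
  by (simp add: trace_ad_def msc_matrix_mult_left trace_msc)

lemma trace_ad_msc_2: "trace_ad u (msc c X) v = c * trace_ad u X v"
  by (simp add: trace_ad_def lbr_msc_left msc_matrix_mult_right trace_msc)

lemma trace_ad_msc_3: "trace_ad u X (msc c v) = c * trace_ad u X v"
  by (simp add: trace_ad_def lbr_msc_right msc_matrix_mult_right trace_msc)

lemma csubspace_sum: "csubspace g \<Longrightarrow> (\<And>j. j \<in> S \<Longrightarrow> f j \<in> g) \<Longrightarrow> sum f S \<in> g"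
  by (induction S rule: infinite_finite_induct) (auto simp: csubspace_def)

(* Gradients are only determined by their trace pairing with g, and g is closed under brackets. *)
lemma trace_ad_cong:
  assumes g: "lie_subalgebra g" and "X \<in> g" "v \<in> g" "u' \<in> g"
    and u: "\<And>y. y \<in> g \<Longrightarrow> trace (u ** y) = trace (u' ** y)"
    and v: "\<And>y. y \<in> g \<Longrightarrow> trace (v ** y) = trace (v' ** y)"
  shows "trace_ad u X v = trace_ad u' X v'"
proof -
  have lbr_closed: "lbr Y Z \<in> g" if "Y \<in> g" "Z \<in> g" for Y Z
    using g that by (simp add: lie_subalgebra_def)
  have "trace_ad u X v = trace_ad u' X v"
    unfolding trace_ad_def using u lbr_closed assms(2,3) by blast
  also have "\<dots> = trace_ad v u' X" by (rule trace_ad_cycle)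
  also have "\<dots> = trace_ad v' u' X"
    unfolding trace_ad_def using v lbr_closed assms(2,4) by blast
  also have "\<dots> = trace_ad u' X v'" by (metis trace_ad_cycle)
  finally show ?thesis .
qed

lemma trace_lincomb_mult:
  "trace ((\<Sum>p\<in>P. msc (c p) (u p)) ** y) = (\<Sum>p\<in>P. c p * trace (u p ** (y :: 'r::finite cmat)))"
proof -
  have "Modules.additive (\<lambda>u. trace (u ** y))"
    by standard (simp add: matrix_add_rdistrib trace_add)
  then have "trace ((\<Sum>p\<in>P. msc (c p) (u p)) ** y) = (\<Sum>p\<in>P. trace (msc (c p) (u p) ** y))"
    by (rule additive.sum)
  then show ?thesis
    by (simp add: msc_matrix_mult_left trace_msc)
qed

lemma trace_ad_lincomb:
  "trace_ad (\<Sum>p\<in>P. msc (c p) (u p)) X (\<Sum>r\<in>R. msc (d r) (v r))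
    = (\<Sum>p\<in>P. \<Sum>r\<in>R. c p * d r * trace_ad (u p) X (v r))"
  by (simp add: additive.sum[OF additive_trace_ad_1] additive.sum[OF additive_trace_ad_3]
      trace_ad_msc_1 trace_ad_msc_3 sum_distrib_left mult.assoc)
    (subst sum.swap, simp add: mult.left_commute)

section \<open>Coefficients of products of linear factors\<close>

lemma esym_Pow:
  "finite S \<Longrightarrow> esym k S a = (\<Sum>T\<in>Pow S. if card T = k then \<Prod>i\<in>T. a i else 0)"
  using sum.inter_filter[of "Pow S" "\<lambda>T. \<Prod>i\<in>T. a i" "\<lambda>T. card T = k"]
  by (simp add: esym_def)

lemma esym_0: "finite S \<Longrightarrow> esym 0 S a = 1"
proof -
  assume "finite S"
  then have "{T. T \<subseteq> S \<and> card T = 0} = {{}}"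
    by (auto dest: finite_subset)
  then show ?thesis by (simp add: esym_def)
qed

lemma esym_eq_0: "finite S \<Longrightarrow> card S < k \<Longrightarrow> esym k S a = 0"
proof -
  assume "finite S" "card S < k"
  then have "card T \<noteq> k" if "T \<subseteq> S" for T
    using card_mono[OF \<open>finite S\<close> that] by linarith
  then have no_subsets: "{T. T \<subseteq> S \<and> card T = k} = {}"
    by blast
  show ?thesis
    unfolding esym_def no_subsets by simp
qed

lemma esym_insert:
  assumes S: "finite S" and x: "x \<notin> S"
  shows "esym (Suc k) (insert x S) a = esym (Suc k) S a + a x * esym k S a"
proof -
  let ?f = "\<lambda>k T. if card T = k then \<Prod>i\<in>T. a i else 0"
  have insert_term: "?f (Suc k) (insert x T) = a x * ?f k T" if "T \<in> Pow S" for T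
  proof -
    from that have "finite T" "x \<notin> T" using x finite_subset[OF _ S] by auto
    then show ?thesis by simp
  qed
  have "inj_on (insert x) (Pow S)"
    using x by (auto simp: inj_on_def)
  moreover have "Pow S \<inter> insert x ` Pow S = {}"
    using x by auto
  ultimately have "esym (Suc k) (insert x S) a
      = (\<Sum>T\<in>Pow S. ?f (Suc k) T) + (\<Sum>T\<in>Pow S. ?f (Suc k) (insert x T))"
    using S by (simp add: esym_Pow Pow_insert sum.union_disjoint sum.reindex)
  also have "\<dots> = esym (Suc k) S a + a x * esym k S a"
    using S by (simp add: esym_Pow insert_term sum_distrib_left)
  finally show ?thesis .
qed

(* The coefficient of x^k in prod_(i:S) (x - a_i), by Vieta's formulas. *)
definition root_poly_coeff :: "(nat \<Rightarrow> complex) \<Rightarrow> nat set \<Rightarrow> int \<Rightarrow> complex" where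
  "root_poly_coeff a S k =
     (if 0 \<le> k \<and> k \<le> int (card S) then (-1)^(card S - nat k) * esym (card S - nat k) S a else 0)"

lemma root_poly_coeff_eq_0: "k < 0 \<or> int (card S) < k \<Longrightarrow> root_poly_coeff a S k = 0"
  by (auto simp: root_poly_coeff_def)

lemma root_poly_coeff_remove:
  assumes S: "finite S" and x: "x \<in> S"
  shows "root_poly_coeff a S k
    = root_poly_coeff a (S - {x}) (k - 1) - a x * root_poly_coeff a (S - {x}) k"
proof -
  define S' where "S' = S - {x}"
  define n where "n = card S'"
  have card_S: "card S = Suc n"
    using S x card_gt_0_iff[of S] by (auto simp: n_def S'_def)
  have rec: "esym (Suc j) S a = esym (Suc j) S' a + a x * esym j S' a" for j
    using esym_insert[of S' x j a] S x by (simp add: S'_def insert_absorb)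
  have coeff_S: "root_poly_coeff a S (int m) = (-1)^(Suc n - m) * esym (Suc n - m) S a"
    and coeff_S': "root_poly_coeff a S' (int m) = (-1)^(n - m) * esym (n - m) S' a"
    if "m \<le> n" for m
    using that card_S by (simp_all add: root_poly_coeff_def n_def)
  consider "k < 0 \<or> int (Suc n) < k" | "k = 0" | "0 < k" "k \<le> int n" | "k = int (Suc n)"
    by linarith
  then show ?thesis
  proof cases
    case 1
    then have "root_poly_coeff a S k = 0" "root_poly_coeff a S' (k - 1) = 0"
      "root_poly_coeff a S' k = 0"
      using card_S by (auto intro!: root_poly_coeff_eq_0 simp: n_def[symmetric])
    then show ?thesis
      unfolding S'_def by simp
  next
    case 2
    have "esym (Suc n) S' a = 0"
      using S by (simp add: esym_eq_0 n_def S'_def)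
    then show ?thesis
      using 2 rec coeff_S[of 0] coeff_S'[of 0] by (simp add: root_poly_coeff_def S'_def)
  next
    case 3
    then obtain m where m: "k = int m" "0 < m" "m \<le> n"
      by (metis nonneg_int_cases of_nat_0_less_iff of_nat_le_iff order_less_imp_le)
    define j where "j = n - m"
    have "k - 1 = int (m - 1)" "m - 1 \<le> n" "Suc n - m = Suc j" "n - (m - 1) = Suc j" "n - m = j"
      using m by (auto simp: j_def)
    then have "root_poly_coeff a S k = (-1)^Suc j * esym (Suc j) S a"
      and "root_poly_coeff a S' (k - 1) = (-1)^Suc j * esym (Suc j) S' a"
      and "root_poly_coeff a S' k = (-1)^j * esym j S' a"
      using m coeff_S[of m] coeff_S'[of m] coeff_S'[of "m - 1"] by simp_all
    then show ?thesis
      unfolding S'_def[symmetric] rec by (simp add: algebra_simps)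
  next
    case 4
    have "finite S'"
      using S by (simp add: S'_def)
    then have "root_poly_coeff a S k = 1" "root_poly_coeff a S' (k - 1) = 1"
      "root_poly_coeff a S' k = 0"
      using 4 S card_S coeff_S'[of n] by (simp_all add: root_poly_coeff_def esym_0 flip: n_def)
    then show ?thesis
      unfolding S'_def by simp
  qed
qed

section \<open>The diagonal tensor in the coordinates B\<close>

lemma Bcoord_eq_lincomb:
  "Bcoord N a \<sigma> X k
    = (\<Sum>j=1..N. msc (root_poly_coeff a ({1..N} - {j}) k) (X j)) + msc (root_poly_coeff a {1..N} k) \<sigma>"
proof -
  have card_le: "int (card ({1..N} - {j})) \<le> int N" for j
    by (metis card_Diff1_le card_atLeastAtMost diff_Suc_1 finite_atLeastAtMost of_nat_le_iff)
  consider "k < 0 \<or> k > int N" | "k = int N" | "0 \<le> k \<and> k < int N" by linarith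
  then show ?thesis
  proof cases
    case 1
    then have "root_poly_coeff a ({1..N} - {j}) k = 0" for j
      using card_le[of j] by (intro root_poly_coeff_eq_0) linarith
    moreover have "root_poly_coeff a {1..N} k = 0"
      using 1 by (intro root_poly_coeff_eq_0) simp
    ultimately show ?thesis
      using 1 by (simp add: Bcoord_def)
  next
    case 2
    then have "root_poly_coeff a ({1..N} - {j}) k = 0" if "j \<in> {1..N}" for j
      using that by (intro root_poly_coeff_eq_0) auto
    moreover have "root_poly_coeff a {1..N} k = 1"
      using 2 by (simp add: root_poly_coeff_def esym_0)
    ultimately show ?thesis
      using 2 by (simp add: Bcoord_def)
  next
    case 3
    have "msc ((-1)^(N - nat k - 1) * esym (N - nat k - 1) ({1..N} - {j}) a) (X j)
        = msc (root_poly_coeff a ({1..N} - {j}) k) (X j)" if "j \<in> {1..N}" for j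
      using 3 that by (simp add: root_poly_coeff_def)
    then show ?thesis
      using 3 by (simp add: Bcoord_def root_poly_coeff_def Let_def)
  qed
qed

lemma trace_ad_Bcoord:
  "trace_ad u (Bcoord N a \<sigma> A k) v
    = (\<Sum>i=1..N. root_poly_coeff a ({1..N} - {i}) k * trace_ad u (A i) v)
      + root_poly_coeff a {1..N} k * trace_ad u \<sigma> v"
  by (simp add: Bcoord_eq_lincomb additive.add[OF additive_trace_ad_2]
      additive.sum[OF additive_trace_ad_2] trace_ad_msc_2)

lemma Bcoord_single_variation:
  assumes "i \<in> {1..N}"
  shows "Bcoord N a \<sigma> (\<lambda>j. A j + msc t (if j = i then y else 0)) k
    = Bcoord N a \<sigma> A k + msc t (msc (root_poly_coeff a ({1..N} - {i}) k) y)"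
proof -
  have "(\<Sum>j=1..N. msc (root_poly_coeff a ({1..N} - {j}) k) (msc t (if j = i then y else 0)))
      = (\<Sum>j=1..N. if j = i then msc (root_poly_coeff a ({1..N} - {i}) k) (msc t y) else 0)"
    by (intro sum.cong) auto
  then have "(\<Sum>j=1..N. msc (root_poly_coeff a ({1..N} - {j}) k) (msc t (if j = i then y else 0)))
      = msc t (msc (root_poly_coeff a ({1..N} - {i}) k) y)"
    using assms by (simp add: msc_msc mult.commute)
  then show ?thesis
    by (simp add: Bcoord_eq_lincomb msc_add sum.distrib algebra_simps)
qed

lemma has_grad_Bcoord_chain_rule:
  fixes F :: "(nat \<Rightarrow> 'r::finite cmat) \<Rightarrow> complex"
  assumes g: "csubspace g"
    and grad_A: "has_grad g 1 N (\<lambda>X. F (\<lambda>l. Bcoord N a \<sigma> X (int l))) A dA"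
    and grad_B: "has_grad g 0 N F (\<lambda>l. Bcoord N a \<sigma> A (int l)) dB"
    and i: "i \<in> {1..N}" and y: "y \<in> g"
  shows "trace (dA i ** y) = trace ((\<Sum>p<N. msc (root_poly_coeff a ({1..N} - {i}) (int p)) (dB p)) ** y)"
proof -
  let ?m = "root_poly_coeff a ({1..N} - {i})"
  define V where "V j = (if j = i then y else 0)" for j
  define W where "W l = msc (?m (int l)) y" for l
  have "(\<forall>j\<in>{1..<1+N}. V j \<in> g) \<and> (\<forall>j. j \<notin> {1..<1+N} \<longrightarrow> V j = 0)"
    using i y g by (auto simp: V_def csubspace_def)
  then have "((\<lambda>t. F (\<lambda>l. Bcoord N a \<sigma> (\<lambda>j. A j + msc t (V j)) (int l))) has_field_derivative
      (\<Sum>j\<in>{1..<1+N}. trace (dA j ** V j))) (at 0)"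
    using grad_A unfolding has_grad_def by blast
  moreover have "?m (int l) = 0" if "N \<le> l" for l
    using that i by (intro root_poly_coeff_eq_0) simp
  then have "(\<forall>l\<in>{0..<0+N}. W l \<in> g) \<and> (\<forall>l. l \<notin> {0..<0+N} \<longrightarrow> W l = 0)"
    using y g by (auto simp: W_def csubspace_def)
  then have "((\<lambda>t. F (\<lambda>l. Bcoord N a \<sigma> A (int l) + msc t (W l))) has_field_derivative
      (\<Sum>l\<in>{0..<0+N}. trace (dB l ** W l))) (at 0)"
    using grad_B unfolding has_grad_def by blast
  ultimately have "(\<Sum>j\<in>{1..<1+N}. trace (dA j ** V j)) = (\<Sum>l\<in>{0..<0+N}. trace (dB l ** W l))"
    unfolding V_def W_def Bcoord_single_variation[OF i] by (rule DERIV_unique)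
  moreover have "(\<Sum>j\<in>{1..<1+N}. trace (dA j ** V j)) = trace (dA i ** y)"
  proof -
    have "(\<Sum>j\<in>{1..<1+N}. trace (dA j ** V j)) = (\<Sum>j\<in>{1..<1+N}. if j = i then trace (dA i ** y) else 0)"
      by (intro sum.cong) (auto simp: V_def trace_def)
    then show ?thesis
      using i by simp
  qed
  moreover have "(\<Sum>l\<in>{0..<0+N}. trace (dB l ** W l)) = trace ((\<Sum>p<N. msc (?m (int p)) (dB p)) ** y)"
    by (simp add: W_def trace_lincomb_mult msc_matrix_mult_right trace_msc atLeast0LessThan)
  ultimately show ?thesis
    by simp
qed

lemma P_bracket_eq_B_gradients:
  fixes g :: "'r::finite cmat set"
  assumes g: "lie_subalgebra g" and A: "\<forall>i\<in>{1..N}. A i \<in> g"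
    and F_A: "has_grad g 1 N (\<lambda>X. F (\<lambda>l. Bcoord N a \<sigma> X (int l))) A dFA"
    and G_A: "has_grad g 1 N (\<lambda>X. G (\<lambda>l. Bcoord N a \<sigma> X (int l))) A dGA"
    and F_B: "has_grad g 0 N F (\<lambda>l. Bcoord N a \<sigma> A (int l)) dFB"
    and G_B: "has_grad g 0 N G (\<lambda>l. Bcoord N a \<sigma> A (int l)) dGB"
  shows "P_bracket N A dFA dGA
    = (\<Sum>p<N. \<Sum>r<N. \<Sum>i=1..N. root_poly_coeff a ({1..N} - {i}) (int p)
         * root_poly_coeff a ({1..N} - {i}) (int r) * trace_ad (dFB p) (A i) (dGB r))"
proof -
  let ?m = "\<lambda>i p. root_poly_coeff a ({1..N} - {i}) (int p)"
  define WF where "WF i = (\<Sum>p<N. msc (?m i p) (dFB p))" for i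
  define WG where "WG i = (\<Sum>r<N. msc (?m i r) (dGB r))" for i
  have cs: "csubspace g"
    using g by (simp add: lie_subalgebra_def)
  have "WF i \<in> g" for i
    unfolding WF_def using cs F_B by (intro csubspace_sum) (auto simp: csubspace_def has_grad_def)
  moreover have "dGA i \<in> g" if "i \<in> {1..N}" for i
    using G_A that by (auto simp: has_grad_def)
  ultimately have "trace_ad (dFA i) (A i) (dGA i) = trace_ad (WF i) (A i) (WG i)" if "i \<in> {1..N}" for i
    using g A that has_grad_Bcoord_chain_rule[OF cs F_A F_B] has_grad_Bcoord_chain_rule[OF cs G_A G_B]
    unfolding WF_def WG_def by (intro trace_ad_cong) auto
  then have "P_bracket N A dFA dGA = (\<Sum>i=1..N. trace_ad (WF i) (A i) (WG i))"
    unfolding P_bracket_def trace_ad_def[symmetric] by simp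
  also have "\<dots> = (\<Sum>i=1..N. \<Sum>p<N. \<Sum>r<N. ?m i p * ?m i r * trace_ad (dFB p) (A i) (dGB r))"
    unfolding WF_def WG_def trace_ad_lincomb ..
  also have "\<dots> = (\<Sum>p<N. \<Sum>r<N. \<Sum>i=1..N. ?m i p * ?m i r * trace_ad (dFB p) (A i) (dGB r))"
    by (simp only: sum.swap[of _ "{1..N}"])
  finally show ?thesis .
qed

section \<open>The tensors Pi_l\<close>

(* The (p,r) entry of Pi_l, counting rows and columns from 0, is
   block_sign l p r * [B_(p+r+1-l), .]. *)
definition block_sign :: "nat \<Rightarrow> nat \<Rightarrow> nat \<Rightarrow> complex" where
  "block_sign l p r = (if p < l \<and> r < l then -1 else if l \<le> p \<and> l \<le> r then 1 else 0)"

lemma double_sum_atLeast1_atMost_shift: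
  fixes f :: "nat \<Rightarrow> nat \<Rightarrow> 'a::comm_monoid_add"
  shows "(\<Sum>i=1..n. \<Sum>j=1..n. f (m + i - 1) (m + j - 1)) = (\<Sum>p=m..<m+n. \<Sum>r=m..<m+n. f p r)"
proof -
  have shift: "(\<Sum>i=1..n. h (m + i - 1)) = (\<Sum>p=m..<m+n. h p)" for h :: "nat \<Rightarrow> 'a"
    by (rule sum.reindex_bij_witness[of _ "\<lambda>p. p + 1 - m" "\<lambda>i. m + i - 1"]) auto
  have "(\<Sum>i=1..n. \<Sum>j=1..n. f (m + i - 1) (m + j - 1)) = (\<Sum>i=1..n. \<Sum>r=m..<m+n. f (m + i - 1) r)"
    by (rule sum.cong[OF refl], rule shift)
  also have "\<dots> = (\<Sum>p=m..<m+n. \<Sum>r=m..<m+n. f p r)"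
    by (rule shift)
  finally show ?thesis .
qed

lemma Pi_bracket_eq_block_sign:
  fixes B :: "int \<Rightarrow> 'r::finite cmat"
  assumes "l \<le> N"
  shows "Pi_bracket N l B dF dG
    = (\<Sum>p<N. \<Sum>r<N. block_sign l p r * trace_ad (dF p) (B (int p + int r + 1 - int l)) (dG r))"
proof -
  define t where "t p r = trace_ad (dF p) (B (int p + int r + 1 - int l)) (dG r)" for p r
  have split: "(\<Sum>p<N. f p) = (\<Sum>p<l. f p) + (\<Sum>p=l..<N. f p)" for f :: "nat \<Rightarrow> complex"
    using assms by (simp add: atLeast0LessThan[symmetric] sum.atLeastLessThan_concat)
  have trace_neg: "trace (X ** - Y) = - trace (X ** Y)" for X Y :: "'r cmat"
    by (simp add: trace_def matrix_matrix_mult_def sum_negf)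
  have "(\<Sum>i=1..l. \<Sum>j=1..l. trace (dF (i-1) ** (- lbr (B (int i + int j - int l - 1)) (dG (j-1)))))
      = (\<Sum>i=1..l. \<Sum>j=1..l. - t (0 + i - 1) (0 + j - 1))"
    by (intro sum.cong) (auto simp: t_def trace_ad_def trace_neg of_nat_diff algebra_simps)
  also have "\<dots> = (\<Sum>p<l. \<Sum>r<l. - t p r)"
    using double_sum_atLeast1_atMost_shift[of "\<lambda>p r. - t p r" 0 l] by (simp add: atLeast0LessThan)
  finally have upper_block: "(\<Sum>i=1..l. \<Sum>j=1..l.
      trace (dF (i-1) ** (- lbr (B (int i + int j - int l - 1)) (dG (j-1))))) = (\<Sum>p<l. \<Sum>r<l. - t p r)" .
  have "(\<Sum>i=1..N-l. \<Sum>j=1..N-l. trace (dF (l+i-1) ** lbr (B (int i + int j + int l - 1)) (dG (l+j-1))))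
      = (\<Sum>i=1..N-l. \<Sum>j=1..N-l. t (l + i - 1) (l + j - 1))"
    by (intro sum.cong) (auto simp: t_def trace_ad_def of_nat_diff algebra_simps)
  also have "\<dots> = (\<Sum>p=l..<N. \<Sum>r=l..<N. t p r)"
    using assms double_sum_atLeast1_atMost_shift[of t l "N - l"] by simp
  finally have lower_block: "(\<Sum>i=1..N-l. \<Sum>j=1..N-l.
      trace (dF (l+i-1) ** lbr (B (int i + int j + int l - 1)) (dG (l+j-1)))) = (\<Sum>p=l..<N. \<Sum>r=l..<N. t p r)" .
  have "(\<Sum>r<N. block_sign l p r * t p r) = (if p < l then (\<Sum>r<l. - t p r) else (\<Sum>r=l..<N. t p r))" for p
    unfolding split[of "\<lambda>r. block_sign l p r * t p r"] by (simp add: block_sign_def)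
  then have "(\<Sum>p<N. \<Sum>r<N. block_sign l p r * t p r) = (\<Sum>p<l. \<Sum>r<l. - t p r) + (\<Sum>p=l..<N. \<Sum>r=l..<N. t p r)"
    unfolding split[of "\<lambda>p. \<Sum>r<N. block_sign l p r * t p r"] by simp
  then show ?thesis
    unfolding Pi_bracket_def upper_block lower_block t_def by (rule sym)
qed

lemma sum_block_sign_convolution:
  fixes x y :: "int \<Rightarrow> complex"
  assumes x: "\<And>l. int N < l \<Longrightarrow> x l = 0" and y: "\<And>k. k < 0 \<Longrightarrow> y k = 0"
    and pr: "p \<le> r" "r < N"
  shows "(\<Sum>l=0..N. - x (int l) * block_sign l p r * y (int p + int r + 1 - int l))
    = (\<Sum>l=r+1..p+r+1. x (int l) * y (int p + int r + 1 - int l) - x (int p + int r + 1 - int l) * y (int l))"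
proof -
  define f where "f l = x (int l) * y (int p + int r + 1 - int l)" for l
  have "(\<Sum>l=0..N. - x (int l) * block_sign l p r * y (int p + int r + 1 - int l))
      = (\<Sum>l=0..N. (if r < l then f l else 0) - (if l \<le> p then f l else 0))"
    using pr by (intro sum.cong) (auto simp: block_sign_def f_def)
  also have "\<dots> = (\<Sum>l\<in>{l\<in>{0..N}. r < l}. f l) - (\<Sum>l\<in>{l\<in>{0..N}. l \<le> p}. f l)"
    by (simp only: sum_subtractf sum.inter_filter[OF finite_atLeastAtMost])
  also have "\<dots> = (\<Sum>l=r+1..N. f l) - (\<Sum>l=0..p. f l)"
  proof -
    have "{l\<in>{0..N}. r < l} = {r+1..N}" "{l\<in>{0..N}. l \<le> p} = {0..p}"
      using pr by auto
    then show ?thesis by simp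
  qed
  also have "(\<Sum>l=r+1..N. f l) = (\<Sum>l=r+1..max N (p+r+1). f l)"
    using x by (intro sum.mono_neutral_left) (auto simp: f_def)
  also have "\<dots> = (\<Sum>l=r+1..p+r+1. f l)"
    using y by (intro sum.mono_neutral_right) (auto simp: f_def)
  also have "(\<Sum>l=0..p. f l) = (\<Sum>l=r+1..p+r+1. x (int p + int r + 1 - int l) * y (int l))"
    by (rule sum.reindex_bij_witness[of _ "\<lambda>l. p + r + 1 - l" "\<lambda>l. p + r + 1 - l"])
      (auto simp: f_def of_nat_diff algebra_simps)
  finally show ?thesis
    by (simp add: f_def sum_subtractf)
qed

lemma sum_convolution_telescope:
  fixes m q :: "int \<Rightarrow> complex"
  assumes q: "\<And>l. q l = m (l - 1) - c * m l" and m: "\<And>k. k < 0 \<Longrightarrow> m k = 0"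
  shows "(\<Sum>l=r+1..p+r+1. q (int l) * m (int p + int r + 1 - int l) - q (int p + int r + 1 - int l) * m (int l))
    = m (int p) * m (int r)"
proof -
  define G where "G l = - m (int l - 1) * m (int p + int r + 1 - int l)" for l
  have "(\<Sum>l=r+1..p+r+1. q (int l) * m (int p + int r + 1 - int l) - q (int p + int r + 1 - int l) * m (int l))
      = (\<Sum>l=r+1..p+r+1. G (Suc l) - G l)"
    by (intro sum.cong) (auto simp: q G_def algebra_simps)
  also have "\<dots> = G (Suc (p + r + 1)) - G (r + 1)"
    by (rule sum_Suc_diff) simp
  also have "\<dots> = m (int p) * m (int r)"
    using m[of "-1"] by (simp add: G_def algebra_simps)
  finally show ?thesis .
qed

lemma sum_block_sign_self_convolution:
  fixes x :: "int \<Rightarrow> complex"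
  assumes "\<And>l. int N < l \<or> l < 0 \<Longrightarrow> x l = 0" and "p \<le> r" "r < N"
  shows "(\<Sum>l=0..N. - x (int l) * block_sign l p r * x (int p + int r + 1 - int l)) = 0"
  using sum_block_sign_convolution[of N x x p r] assms by (simp add: mult.commute)

lemma sum_block_sign_root_poly_coeff:
  fixes a :: "nat \<Rightarrow> complex" and N i p r :: nat
  defines "q \<equiv> root_poly_coeff a {1..N}" and "m \<equiv> root_poly_coeff a ({1..N} - {i})"
  assumes i: "i \<in> {1..N}" and pr: "p \<le> r" "r < N"
  shows "(\<Sum>l=0..N. - q (int l) * block_sign l p r * m (int p + int r + 1 - int l)) = m (int p) * m (int r)"
proof -
  have m_vanish: "m k = 0" if "k < 0" for k
    using that by (simp add: m_def root_poly_coeff_eq_0)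
  have rec: "q l = m (l - 1) - a i * m l" for l
    unfolding q_def m_def using i by (intro root_poly_coeff_remove) auto
  have "int N < l \<Longrightarrow> q l = 0" for l
    by (simp add: q_def root_poly_coeff_eq_0)
  then show ?thesis
    using sum_block_sign_convolution[of N q m, OF _ m_vanish pr]
      sum_convolution_telescope[where q=q and m=m and c="a i", OF rec m_vanish] by simp
qed

lemma block_sign_sym: "block_sign l p r = block_sign l r p"
  by (auto simp: block_sign_def)

lemma sum_block_sign_Bcoord_le:
  fixes u v :: "'r::finite cmat"
  assumes pr: "p \<le> r" "r < N"
  shows "(\<Sum>l=0..N. - root_poly_coeff a {1..N} (int l) * block_sign l p r
            * trace_ad u (Bcoord N a \<sigma> A (int p + int r + 1 - int l)) v)
       = (\<Sum>i=1..N. root_poly_coeff a ({1..N} - {i}) (int p) * root_poly_coeff a ({1..N} - {i}) (int r)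
            * trace_ad u (A i) v)"
proof -
  let ?q = "root_poly_coeff a {1..N}" and ?m = "\<lambda>i. root_poly_coeff a ({1..N} - {i})"
  let ?n = "int p + int r + 1"
  have "?q l = 0" if "int N < l \<or> l < 0" for l
    using that by (intro root_poly_coeff_eq_0) auto
  then have sigma_part: "(\<Sum>l=0..N. - ?q (int l) * block_sign l p r * ?q (?n - int l)) = 0"
    using pr by (rule sum_block_sign_self_convolution)
  have "(\<Sum>l=0..N. - ?q (int l) * block_sign l p r * trace_ad u (Bcoord N a \<sigma> A (?n - int l)) v)
      = (\<Sum>l=0..N. (\<Sum>i=1..N. - ?q (int l) * block_sign l p r * ?m i (?n - int l) * trace_ad u (A i) v)
          + - ?q (int l) * block_sign l p r * ?q (?n - int l) * trace_ad u \<sigma> v)"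
    by (intro sum.cong refl) (simp add: trace_ad_Bcoord distrib_left sum_distrib_left mult.assoc)
  also have "\<dots> = (\<Sum>l=0..N. \<Sum>i=1..N. - ?q (int l) * block_sign l p r * ?m i (?n - int l) * trace_ad u (A i) v)
        + (\<Sum>l=0..N. - ?q (int l) * block_sign l p r * ?q (?n - int l)) * trace_ad u \<sigma> v"
    by (simp only: sum.distrib sum_distrib_right)
  also have "\<dots> = (\<Sum>i=1..N. (\<Sum>l=0..N. - ?q (int l) * block_sign l p r * ?m i (?n - int l)) * trace_ad u (A i) v)"
    unfolding sigma_part by (simp add: sum.swap[of _ "{0..N}"] sum_distrib_right)
  also have "\<dots> = (\<Sum>i=1..N. ?m i (int p) * ?m i (int r) * trace_ad u (A i) v)"
    using sum_block_sign_root_poly_coeff[OF _ pr] by simp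
  finally show ?thesis .
qed

lemma sum_block_sign_Bcoord:
  fixes u v :: "'r::finite cmat"
  assumes p: "p < N" and r: "r < N"
  shows "(\<Sum>l=0..N. - root_poly_coeff a {1..N} (int l) * block_sign l p r
            * trace_ad u (Bcoord N a \<sigma> A (int p + int r + 1 - int l)) v)
       = (\<Sum>i=1..N. root_poly_coeff a ({1..N} - {i}) (int p) * root_poly_coeff a ({1..N} - {i}) (int r)
            * trace_ad u (A i) v)"
proof (cases "p \<le> r")
  case True
  then show ?thesis
    using r by (rule sum_block_sign_Bcoord_le)
next
  case False
  then show ?thesis
    using sum_block_sign_Bcoord_le[of r p] p by (simp add: block_sign_sym add.commute mult.commute)
qed

lemma Pi_bracket_combination_eq:
  "(\<Sum>l=0..N. - root_poly_coeff a {1..N} (int l) * Pi_bracket N l (Bcoord N a \<sigma> A) dF dG)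
    = (\<Sum>p<N. \<Sum>r<N. \<Sum>i=1..N. root_poly_coeff a ({1..N} - {i}) (int p)
         * root_poly_coeff a ({1..N} - {i}) (int r) * trace_ad (dF p) (A i) (dG r))"
proof -
  let ?t = "\<lambda>l p r. - root_poly_coeff a {1..N} (int l) * block_sign l p r
      * trace_ad (dF p) (Bcoord N a \<sigma> A (int p + int r + 1 - int l)) (dG r)"
  have "(\<Sum>l=0..N. - root_poly_coeff a {1..N} (int l) * Pi_bracket N l (Bcoord N a \<sigma> A) dF dG)
      = (\<Sum>l=0..N. \<Sum>p<N. \<Sum>r<N. ?t l p r)"
    by (intro sum.cong refl) (simp add: Pi_bracket_eq_block_sign sum_distrib_left mult.assoc)
  also have "\<dots> = (\<Sum>p<N. \<Sum>r<N. \<Sum>l=0..N. ?t l p r)"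
    by (simp only: sum.swap[of _ "{0..N}"])
  also have "\<dots> = (\<Sum>p<N. \<Sum>r<N. \<Sum>i=1..N. root_poly_coeff a ({1..N} - {i}) (int p)
         * root_poly_coeff a ({1..N} - {i}) (int r) * trace_ad (dF p) (A i) (dG r))"
    by (rule sum.cong[OF refl], rule sum.cong[OF refl], rule sum_block_sign_Bcoord) auto
  finally show ?thesis .
qed

theorem lemma1:
  fixes g :: "'r::finite cmat set" and N :: nat and a :: "nat \<Rightarrow> complex" and \<sigma> :: "'r cmat"
    and A :: "nat \<Rightarrow> 'r cmat"
    and Ft Gt :: "(nat \<Rightarrow> 'r cmat) \<Rightarrow> complex"
    and dFA dGA dFB dGB :: "nat \<Rightarrow> 'r cmat"
  assumes "semisimple g"
    and "N \<ge> 1"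
    and "inj_on a {1..N}"
    and "\<sigma> \<in> g"
    and "\<forall>i\<in>{1..N}. A i \<in> g"
    and "has_grad g 1 N (\<lambda>X. Ft (\<lambda>l. Bcoord N a \<sigma> X (int l))) A dFA"
    and "has_grad g 1 N (\<lambda>X. Gt (\<lambda>l. Bcoord N a \<sigma> X (int l))) A dGA"
    and "has_grad g 0 N Ft (\<lambda>l. Bcoord N a \<sigma> A (int l)) dFB"
    and "has_grad g 0 N Gt (\<lambda>l. Bcoord N a \<sigma> A (int l)) dGB"
  shows "P_bracket N A dFA dGA =
    (\<Sum>l=0..N. ((-1)^(N-l+1) * esym (N-l) {1..N} a) * Pi_bracket N l (Bcoord N a \<sigma> A) dFB dGB)"
proof -
  have "lie_subalgebra g"
    using assms(1) by (simp add: semisimple_def)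
  then have "P_bracket N A dFA dGA
      = (\<Sum>p<N. \<Sum>r<N. \<Sum>i=1..N. root_poly_coeff a ({1..N} - {i}) (int p)
           * root_poly_coeff a ({1..N} - {i}) (int r) * trace_ad (dFB p) (A i) (dGB r))"
    using assms(5-9) by (rule P_bracket_eq_B_gradients)
  also have "\<dots> = (\<Sum>l=0..N. - root_poly_coeff a {1..N} (int l) * Pi_bracket N l (Bcoord N a \<sigma> A) dFB dGB)"
    by (rule Pi_bracket_combination_eq[symmetric])
  also have "\<dots> = (\<Sum>l=0..N. ((-1)^(N-l+1) * esym (N-l) {1..N} a) * Pi_bracket N l (Bcoord N a \<sigma> A) dFB dGB)"
    by (intro sum.cong refl) (simp add: root_poly_coeff_def)
  finally show ?thesis .
qed

end
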